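(* Let $\Gamma$ be a finite simple graph and $g\in G(\Gamma)$. The following are equivalent: (i) $g$ is cyclically reduced; (ii) there is no geodesic decomposition $g=u^{-1}hu$ with $u,h\in G(\Gamma)$ and $u\ne1$; (iii) $|g^n|=n|g|$ for all $n\ge2$; (iv) $|g^n|=n|g|$ for some $n\ge 2$; (v) for every geodesic decomposition $g=g_1g_2$, the decomposition $g_2g_1$ is also geodesic (i.e. $|g_2g_1|=|g_2|+|g_1|$).
   Context: $G(\Gamma)=\langle v\in V(\Gamma)\mid [v_i,v_j]=1 \text{ if } \{v_i,v_j\}\notin E(\Gamma)\rangle$. $|g|$ is word length with respect to $V(\Gamma)$. A decomposition $g=g_1\cdots g_k$ is geodesic if $|g|=|g_1|+\cdots+|g_k|$. An element is cyclically reduced if it has minimum word length in its conjugacy class. *)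

theory Defs
  imports Main
begin

text \<open>Right-angled Artin group G(Gamma) on a finite vertex set V with (symmetric,
irreflexive) edge relation E; generators commute iff they are NOT adjacent.
Group elements are represented by words over letters (v, b), where b = True means v
and b = False means v^-1; two words represent the same element iff they are related
by the equivalence closure of free cancellation and commutation of non-adjacent letters.\<close>

type_synonym 'v letter = "'v \<times> bool"

definition inv_letter :: "'v letter \<Rightarrow> 'v letter" where
  "inv_letter a = (fst a, \<not> snd a)"

definition inv_word :: "'v letter list \<Rightarrow> 'v letter list" where
  "inv_word w = rev (map inv_letter w)"

definition word :: "'v set \<Rightarrow> 'v letter list \<Rightarrow> bool" where
  "word V w \<longleftrightarrow> fst ` set w \<subseteq> V"

inductive rstep :: "'v set \<Rightarrow> ('v \<Rightarrow> 'v \<Rightarrow> bool) \<Rightarrow> 'v letter list \<Rightarrow> 'v letter list \<Rightarrow> bool"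
  for V E where
  cancel: "fst a \<in> V \<Longrightarrow> rstep V E (xs @ a # inv_letter a # ys) (xs @ ys)"
| comm: "fst a \<in> V \<Longrightarrow> fst b \<in> V \<Longrightarrow> \<not> E (fst a) (fst b) \<Longrightarrow>
           rstep V E (xs @ a # b # ys) (xs @ b # a # ys)"

definition eqv :: "'v set \<Rightarrow> ('v \<Rightarrow> 'v \<Rightarrow> bool) \<Rightarrow> 'v letter list \<Rightarrow> 'v letter list \<Rightarrow> bool" where
  "eqv V E = equivclp (rstep V E)"

definition wlen :: "'v set \<Rightarrow> ('v \<Rightarrow> 'v \<Rightarrow> bool) \<Rightarrow> 'v letter list \<Rightarrow> nat" where
  "wlen V E w = (LEAST n. \<exists>w'. eqv V E w w' \<and> length w' = n)"

definition wpow :: "'v letter list \<Rightarrow> nat \<Rightarrow> 'v letter list" where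
  "wpow w n = concat (replicate n w)"

definition cyc_reduced :: "'v set \<Rightarrow> ('v \<Rightarrow> 'v \<Rightarrow> bool) \<Rightarrow> 'v letter list \<Rightarrow> bool" where
  "cyc_reduced V E g \<longleftrightarrow>
     (\<forall>u. word V u \<longrightarrow> wlen V E g \<le> wlen V E (inv_word u @ g @ u))"

end

theory Submission
  imports Defs
begin

text \<open>Word length in G(\<Gamma>) is computed by piling (Crisp, Godelle and Wiest): a word is read
  letter by letter into one stack per vertex, and a letter cancels exactly when its inverse lies
  on top of the stack of its vertex. The piles are invariant under the defining relations, so a
  word along which no letter cancels is geodesic, and every word is equivalent to such a reduced
  word.

  Let w be a reduced word for g. If w = q a m a^-1 q' where all letters of q and q' commute with
  a and lie on other vertices, then g = a h a^-1 with |h| = |g| - 2, and all five conditions fail.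
  Otherwise no power w^n can contain a cancellation: it would pair a letter of one copy of w with
  its inverse in the next copy, producing such a decomposition. Hence |g^n| = n |g| for all n,
  which forces g to be cyclically reduced, and (ii) and (v) follow from cyclic reducedness.\<close>

lemma inv_letter_inv_letter [simp]: "inv_letter (inv_letter a) = a"
  by (simp add: inv_letter_def)

lemma fst_inv_letter [simp]: "fst (inv_letter a) = fst a"
  by (simp add: inv_letter_def)

lemma snd_inv_letter [simp]: "snd (inv_letter a) = (\<not> snd a)"
  by (simp add: inv_letter_def)

lemma inv_letter_neq [simp]: "inv_letter a \<noteq> a"
  by (simp add: inv_letter_def prod_eq_iff)

lemma inv_word_Nil [simp]: "inv_word [] = []"
  by (simp add: inv_word_def)

lemma inv_word_Cons [simp]: "inv_word (a # u) = inv_word u @ [inv_letter a]"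
  by (simp add: inv_word_def)

lemma inv_word_inv_word [simp]: "inv_word (inv_word u) = u"
  by (simp add: inv_word_def rev_map comp_def)

lemma word_Nil [simp]: "word V []"
  by (simp add: word_def)

lemma word_Cons [simp]: "word V (a # u) \<longleftrightarrow> fst a \<in> V \<and> word V u"
  by (auto simp add: word_def)

lemma word_append [simp]: "word V (u @ v) \<longleftrightarrow> word V u \<and> word V v"
  by (auto simp add: word_def)

lemma word_inv_word [simp]: "word V (inv_word u) \<longleftrightarrow> word V u"
  by (simp add: inv_word_def word_def image_image)

lemma eqv_refl [simp]: "eqv V E x x"
  by (simp add: eqv_def)

lemma eqv_sym: "eqv V E x y \<Longrightarrow> eqv V E y x"
  unfolding eqv_def by (rule equivclp_sym)

lemma eqv_trans [trans]: "eqv V E x y \<Longrightarrow> eqv V E y z \<Longrightarrow> eqv V E x z"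
  unfolding eqv_def by (rule equivclp_trans)

lemma rstep_eqv: "rstep V E x y \<Longrightarrow> eqv V E x y"
  unfolding eqv_def by blast

lemma rstep_append_context: "rstep V E x y \<Longrightarrow> rstep V E (l @ x @ r) (l @ y @ r)"
proof (induction rule: rstep.induct)
  case (cancel a xs ys)
  then show ?case using rstep.cancel[where xs="l @ xs" and ys="ys @ r"] by simp
next
  case (comm a b xs ys)
  then show ?case using rstep.comm[where xs="l @ xs" and ys="ys @ r"] by simp
qed

lemma eqv_append_context: "eqv V E x y \<Longrightarrow> eqv V E (l @ x @ r) (l @ y @ r)"
  unfolding eqv_def
proof (induction rule: equivclp_induct)
  case base
  then show ?case by simp
next
  case (step y z)
  then show ?case using rstep_append_context by (metis equivclp_into_equivclp)
qed

lemma eqv_append: "eqv V E x x' \<Longrightarrow> eqv V E y y' \<Longrightarrow> eqv V E (x @ y) (x' @ y')"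
  using eqv_append_context[of V E x x' "[]" y] eqv_append_context[of V E y y' x' "[]"] eqv_trans
  by fastforce

lemma eqv_cancel_letter: "fst a \<in> V \<Longrightarrow> eqv V E (xs @ a # inv_letter a # ys) (xs @ ys)"
  by (rule rstep_eqv, rule rstep.cancel)

lemma eqv_inv_word_append: "word V u \<Longrightarrow> eqv V E (inv_word u @ u) []"
proof (induction u)
  case Nil
  then show ?case by simp
next
  case (Cons a u)
  have "eqv V E (inv_word u @ inv_letter a # a # u) (inv_word u @ u)"
    using eqv_cancel_letter[of "inv_letter a" V E "inv_word u" u] Cons.prems by simp
  then show ?case using Cons eqv_trans by fastforce
qed

lemma eqv_append_inv_word: "word V u \<Longrightarrow> eqv V E (u @ inv_word u) []"
  using eqv_inv_word_append[of V "inv_word u" E] by simp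

lemma wlen_witness: "\<exists>w'. eqv V E w w' \<and> length w' = wlen V E w"
  unfolding wlen_def by (rule LeastI_ex) (use eqv_refl in blast)

lemma wlen_le: "eqv V E w w' \<Longrightarrow> wlen V E w \<le> length w'"
  unfolding wlen_def by (rule Least_le) blast

lemma wlen_le_length: "wlen V E w \<le> length w"
  by (rule wlen_le) simp

lemma wlen_eqv: "eqv V E x y \<Longrightarrow> wlen V E x = wlen V E y"
  by (metis wlen_witness wlen_le eqv_sym eqv_trans le_antisym)

lemma wlen_append_le: "wlen V E (x @ y) \<le> wlen V E x + wlen V E y"
proof -
  obtain x' where x': "eqv V E x x'" "length x' = wlen V E x" using wlen_witness by blast
  obtain y' where y': "eqv V E y y'" "length y' = wlen V E y" using wlen_witness by blast
  have "eqv V E (x @ y) (x' @ y')" using eqv_append x' y' by blast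
  then show ?thesis using wlen_le x' y' by fastforce
qed

lemma wlen_eq_0_iff: "wlen V E u = 0 \<longleftrightarrow> eqv V E u []"
  using wlen_witness[of V E u] wlen_le[of V E u "[]"] by auto

lemma wpow_0 [simp]: "wpow w 0 = []"
  by (simp add: wpow_def)

lemma wpow_Suc: "wpow w (Suc n) = w @ wpow w n"
  by (simp add: wpow_def)

lemma wpow_Suc_right: "wpow w (Suc n) = wpow w n @ w"
  unfolding wpow_def replicate_Suc replicate_append_same[symmetric] by simp

lemma length_wpow [simp]: "length (wpow w n) = n * length w"
  by (induction n) (simp_all add: wpow_Suc)

lemma eqv_wpow: "eqv V E x y \<Longrightarrow> eqv V E (wpow x n) (wpow y n)"
  by (induction n) (simp_all add: wpow_Suc eqv_append)

lemma wlen_wpow_le: "wlen V E (wpow x n) \<le> n * wlen V E x"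
proof (induction n)
  case 0
  then show ?case by (simp add: wlen_eq_0_iff)
next
  case (Suc n)
  then show ?case using wlen_append_le[of V E x "wpow x n"] by (simp add: wpow_Suc)
qed

lemma eqv_conjugate_wpow:
  assumes "word V u"
  shows "eqv V E (inv_word u @ wpow g n @ u) (wpow (inv_word u @ g @ u) n)"
proof (induction n)
  case 0
  then show ?case using eqv_inv_word_append[OF assms] by simp
next
  case (Suc n)
  have "eqv V E ((inv_word u @ g) @ (u @ inv_word u) @ (wpow g n @ u))
                ((inv_word u @ g) @ [] @ (wpow g n @ u))"
    by (rule eqv_append_context[OF eqv_append_inv_word[OF assms]])
  then have "eqv V E (inv_word u @ wpow g (Suc n) @ u)
                     ((inv_word u @ g @ u) @ (inv_word u @ wpow g n @ u))"
    by (simp add: wpow_Suc eqv_sym)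
  also have "eqv V E \<dots> ((inv_word u @ g @ u) @ wpow (inv_word u @ g @ u) n)"
    using eqv_append[OF eqv_refl Suc.IH] .
  finally show ?case by (simp add: wpow_Suc)
qed

lemma wpow_split:
  "p @ a # s = wpow w n \<Longrightarrow> \<exists>j q s'. p = wpow w j @ q \<and> w = q @ a # s'"
proof (induction n arbitrary: p s)
  case 0
  then show ?case by simp
next
  case (Suc n)
  then have "p @ a # s = w @ wpow w n" by (simp add: wpow_Suc)
  then obtain us where
    "p = w @ us \<and> us @ a # s = wpow w n \<or> p @ us = w \<and> a # s = us @ wpow w n"
    unfolding append_eq_append_conv2 by blast
  then show ?case
  proof
    assume "p = w @ us \<and> us @ a # s = wpow w n"
    then show ?thesis using Suc.IH by (metis append.assoc wpow_Suc)
  next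
    assume split: "p @ us = w \<and> a # s = us @ wpow w n"
    show ?thesis
    proof (cases us)
      case Nil
      then have "[] @ a # s = wpow w n" using split by simp
      then obtain j q s' where "[] = wpow w j @ q" "w = q @ a # s'"
        using Suc.IH by blast
      then show ?thesis using split Nil
        by (intro exI[of _ "Suc 0"] exI[of _ "[]"] exI[of _ s']) (simp add: wpow_Suc)
    next
      case (Cons x us')
      then show ?thesis using split by (metis append_Nil append_Cons list.inject wpow_0)
    qed
  qed
qed

section \<open>Cyclically reduced elements\<close>

lemma cyc_reduced_conjugation_not_geodesic:
  assumes "cyc_reduced V E g" "word V u" "\<not> eqv V E u []"
    and "eqv V E g (inv_word u @ h @ u)"
  shows "wlen V E g \<noteq> wlen V E (inv_word u) + wlen V E h + wlen V E u"
proof -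
  have "wlen V E g \<le> wlen V E (u @ g @ inv_word u)"
    using assms(1,2) unfolding cyc_reduced_def by (metis word_inv_word inv_word_inv_word)
  also have "eqv V E (u @ g @ inv_word u) ((u @ inv_word u) @ h @ (u @ inv_word u))"
    using eqv_append_context[OF assms(4)] by simp
  moreover have "eqv V E ((u @ inv_word u) @ h @ (u @ inv_word u)) ([] @ h @ [])"
    using eqv_append_inv_word[OF assms(2)] by (intro eqv_append) simp_all
  ultimately have "wlen V E g \<le> wlen V E h"
    using wlen_eqv eqv_trans by (metis append_Nil append_Nil2)
  moreover have "wlen V E u > 0" using assms(3) wlen_eq_0_iff by blast
  ultimately show ?thesis by simp
qed

lemma cyc_reduced_rotation_geodesic:
  assumes "cyc_reduced V E g" "word V g1" "eqv V E g (g1 @ g2)"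
    and "wlen V E g = wlen V E g1 + wlen V E g2"
  shows "wlen V E (g2 @ g1) = wlen V E g2 + wlen V E g1"
proof -
  have "wlen V E g \<le> wlen V E (inv_word g1 @ g @ g1)"
    using assms(1,2) unfolding cyc_reduced_def by blast
  also have "eqv V E (inv_word g1 @ g @ g1) ((inv_word g1 @ g1) @ g2 @ g1)"
    using eqv_append_context[OF assms(3)] by simp
  moreover have "eqv V E ((inv_word g1 @ g1) @ g2 @ g1) ([] @ g2 @ g1)"
    using eqv_inv_word_append[OF assms(2)] by (intro eqv_append) simp_all
  ultimately have "wlen V E g \<le> wlen V E (g2 @ g1)"
    using wlen_eqv eqv_trans by (metis append_Nil)
  then show ?thesis using wlen_append_le[of V E g2 g1] assms(4) by simp
qed

text \<open>If some conjugate h = u\<inverse> g u were shorter than g, then for N = |u| + |u\<inverse>| + 1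
  the identity g^N = u h^N u\<inverse> would give N |g| \<le> |u| + |u\<inverse>| + N |h| < N |g|.\<close>
lemma cyc_reduced_if_wlen_wpow:
  assumes powers: "\<And>n. wlen V E (wpow g n) = n * wlen V E g"
  shows "cyc_reduced V E g"
  unfolding cyc_reduced_def
proof (intro allI impI)
  fix u
  assume u: "word V u"
  define h where "h = inv_word u @ g @ u"
  define N where "N = wlen V E u + wlen V E (inv_word u) + 1"
  have "eqv V E ((u @ inv_word u) @ wpow g N @ (u @ inv_word u)) ([] @ wpow g N @ [])"
    using eqv_append_inv_word[OF u] by (intro eqv_append) simp_all
  then have "eqv V E (wpow g N) (u @ (inv_word u @ wpow g N @ u) @ inv_word u)"
    by (simp add: eqv_sym)
  also have "eqv V E \<dots> (u @ wpow h N @ inv_word u)"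
    unfolding h_def by (rule eqv_append_context[OF eqv_conjugate_wpow[OF u]])
  finally have "N * wlen V E g = wlen V E (u @ wpow h N @ inv_word u)"
    using powers wlen_eqv by metis
  also have "\<dots> \<le> wlen V E u + N * wlen V E h + wlen V E (inv_word u)"
    using wlen_append_le[of V E u "wpow h N @ inv_word u"]
      wlen_append_le[of V E "wpow h N" "inv_word u"] wlen_wpow_le[of V E h N]
    by simp
  finally have "N * wlen V E g < N * (wlen V E h + 1)"
    unfolding N_def by (simp add: algebra_simps)
  then have "wlen V E g < wlen V E h + 1"
    by (rule mult_left_less_imp_less) simp
  then show "wlen V E g \<le> wlen V E (inv_word u @ g @ u)"
    unfolding h_def by simp
qed

section \<open>Piling\<close>

text \<open>Each vertex carries a stack, listed top first: Some t records the letter (v, t), None a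
  blocker left by a letter at a neighbour. The counter goes up with each push and down with each cancellation, so a word
  is reduced iff no letter cancels while it is piled.\<close>

type_synonym 'v stacks = "'v \<Rightarrow> bool option list"

definition touches :: "('v \<Rightarrow> 'v \<Rightarrow> bool) \<Rightarrow> 'v \<Rightarrow> 'v letter \<Rightarrow> bool" where
  "touches E v c \<longleftrightarrow> fst c = v \<or> E (fst c) v"

definition stack_entry :: "'v \<Rightarrow> 'v letter \<Rightarrow> bool option" where
  "stack_entry v c = (if fst c = v then Some (snd c) else None)"

definition cancels :: "'v letter \<Rightarrow> 'v stacks \<Rightarrow> bool" where
  "cancels a P \<longleftrightarrow> (\<exists>r. P (fst a) = Some (\<not> snd a) # r)"

definition push_stacks :: "('v \<Rightarrow> 'v \<Rightarrow> bool) \<Rightarrow> 'v letter \<Rightarrow> 'v stacks \<Rightarrow> 'v stacks" where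
  "push_stacks E a P = (\<lambda>v. if touches E v a then stack_entry v a # P v else P v)"

definition pop_stacks :: "('v \<Rightarrow> 'v \<Rightarrow> bool) \<Rightarrow> 'v letter \<Rightarrow> 'v stacks \<Rightarrow> 'v stacks" where
  "pop_stacks E a P = (\<lambda>v. if touches E v a then tl (P v) else P v)"

definition pile_step :: "('v \<Rightarrow> 'v \<Rightarrow> bool) \<Rightarrow> 'v letter \<Rightarrow> 'v stacks \<times> int \<Rightarrow> 'v stacks \<times> int" where
  "pile_step E a S =
     (if cancels a (fst S) then (pop_stacks E a (fst S), snd S - 1)
      else (push_stacks E a (fst S), snd S + 1))"

definition pile :: "('v \<Rightarrow> 'v \<Rightarrow> bool) \<Rightarrow> 'v letter list \<Rightarrow> 'v stacks \<times> int" where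
  "pile E w = foldl (\<lambda>S a. pile_step E a S) (\<lambda>_. [], 0) w"

definition reduced :: "('v \<Rightarrow> 'v \<Rightarrow> bool) \<Rightarrow> 'v letter list \<Rightarrow> bool" where
  "reduced E w \<longleftrightarrow> snd (pile E w) = int (length w)"

definition column :: "('v \<Rightarrow> 'v \<Rightarrow> bool) \<Rightarrow> 'v \<Rightarrow> 'v letter list \<Rightarrow> bool option list" where
  "column E v w = rev (map (stack_entry v) (filter (touches E v) w))"

lemma touches_inv_letter [simp]: "touches E v (inv_letter c) \<longleftrightarrow> touches E v c"
  by (simp add: touches_def)

lemma column_append [simp]: "column E v (xs @ ys) = column E v ys @ column E v xs"
  by (simp add: column_def)

lemma column_eq_Nil: "filter (touches E v) w = [] \<Longrightarrow> column E v w = []"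
  by (simp add: column_def)

lemma pile_Nil [simp]: "pile E [] = (\<lambda>_. [], 0)"
  by (simp add: pile_def)

lemma pile_snoc [simp]: "pile E (w @ [a]) = pile_step E a (pile E w)"
  by (simp add: pile_def)

lemma pile_append: "pile E (w @ u) = foldl (\<lambda>S a. pile_step E a S) (pile E w) u"
  by (simp add: pile_def)

lemma pile_count_le_length: "snd (pile E w) \<le> int (length w)"
  by (induction w rule: rev_induct) (auto simp: pile_step_def)

lemma reduced_snoc_iff: "reduced E (w @ [a]) \<longleftrightarrow> reduced E w \<and> \<not> cancels a (fst (pile E w))"
  using pile_count_le_length[of E w] by (auto simp: reduced_def pile_step_def)

lemma reduced_appendD: "reduced E (w @ u) \<Longrightarrow> reduced E w"
proof (induction u rule: rev_induct)
  case Nil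
  then show ?case by simp
next
  case (snoc a u)
  then show ?case using reduced_snoc_iff[of E "w @ u" a] by simp
qed

lemma reduced_singleton: "reduced E [a]"
  using reduced_snoc_iff[of E "[]" a] by (simp add: reduced_def cancels_def)

lemma pile_stacks_reduced: "reduced E w \<Longrightarrow> fst (pile E w) v = column E v w"
proof (induction w rule: rev_induct)
  case Nil
  then show ?case by (simp add: column_def)
next
  case (snoc a w)
  then show ?case
    by (auto simp: reduced_snoc_iff pile_step_def push_stacks_def column_def)
qed

lemma not_reduced_first_cancel:
  "\<not> reduced E w \<Longrightarrow> \<exists>p a s. w = p @ a # s \<and> reduced E p \<and> cancels a (fst (pile E p))"
proof (induction w rule: rev_induct)
  case Nil
  then show ?case by (simp add: reduced_def)
next
  case (snoc b w)
  show ?case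
  proof (cases "reduced E w")
    case True
    then show ?thesis using snoc.prems unfolding reduced_snoc_iff
      by (intro exI[of _ w] exI[of _ b] exI[of _ "[]"]) simp
  next
    case False
    then obtain p a s where "w = p @ a # s" "reduced E p" "cancels a (fst (pile E p))"
      using snoc.IH by blast
    then show ?thesis by (intro exI[of _ p] exI[of _ a] exI[of _ "s @ [b]"]) simp
  qed
qed

lemma split_last_filter:
  "filter P xs \<noteq> [] \<Longrightarrow> \<exists>ys zs. xs = ys @ last (filter P xs) # zs \<and> filter P zs = []"
proof (induction xs rule: rev_induct)
  case Nil
  then show ?case by simp
next
  case (snoc x xs)
  show ?case
  proof (cases "P x")
    case True
    then show ?thesis by (intro exI[of _ xs] exI[of _ "[]"]) simp
  next
    case False
    then obtain ys zs where "xs = ys @ last (filter P xs) # zs" "filter P zs = []"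
      using snoc by auto
    then show ?thesis using False by (intro exI[of _ ys] exI[of _ "zs @ [x]"]) simp
  qed
qed

lemma cancels_reduced_last:
  assumes "reduced E p" "cancels a (fst (pile E p))"
  shows "filter (touches E (fst a)) p \<noteq> [] \<and> last (filter (touches E (fst a)) p) = inv_letter a"
proof -
  let ?l = "filter (touches E (fst a)) p"
  obtain r where col: "rev (map (stack_entry (fst a)) ?l) = Some (\<not> snd a) # r"
    using assms pile_stacks_reduced unfolding cancels_def column_def by metis
  then have "?l \<noteq> []" by auto
  moreover have "stack_entry (fst a) (last ?l) = Some (\<not> snd a)"
    using col \<open>?l \<noteq> []\<close> by (metis hd_rev last_map list.sel(1))
  then have "last ?l = inv_letter a"
    by (auto simp: stack_entry_def inv_letter_def prod_eq_iff split: if_splits)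
  ultimately show ?thesis by blast
qed

lemma cancels_reduced_split:
  "reduced E p \<Longrightarrow> cancels a (fst (pile E p)) \<Longrightarrow>
   \<exists>p1 p2. p = p1 @ inv_letter a # p2 \<and> filter (touches E (fst a)) p2 = []"
  using cancels_reduced_last split_last_filter by metis

lemma reduced_no_cancelling_pair:
  assumes "reduced E (p @ a # q @ inv_letter a # s)"
  shows "filter (touches E (fst a)) q \<noteq> []"
proof
  assume free: "filter (touches E (fst a)) q = []"
  have "reduced E ((p @ a # q) @ [inv_letter a])"
    using assms reduced_appendD[of E "(p @ a # q) @ [inv_letter a]" s] by simp
  then have "reduced E (p @ a # q)" "\<not> cancels (inv_letter a) (fst (pile E (p @ a # q)))"
    unfolding reduced_snoc_iff by simp_all
  moreover have "column E (fst a) (p @ a # q) = Some (snd a) # column E (fst a) p"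
    using free by (simp add: column_def touches_def stack_entry_def)
  ultimately show False by (simp add: pile_stacks_reduced cancels_def)
qed

definition cyclically_cancellable :: "('v \<Rightarrow> 'v \<Rightarrow> bool) \<Rightarrow> 'v letter list \<Rightarrow> bool" where
  "cyclically_cancellable E w \<longleftrightarrow>
     (\<exists>q a m q'. w = q @ a # m @ inv_letter a # q' \<and>
        filter (touches E (fst a)) q = [] \<and> filter (touches E (fst a)) q' = [])"

lemma append_Cons_eq_append_ConsD:
  "q @ a # s = m @ b # r \<Longrightarrow> b \<notin> set q \<Longrightarrow> b \<noteq> a \<Longrightarrow> \<exists>m'. s = m' @ b # r"
  by (induction q arbitrary: m) (auto simp: Cons_eq_append_conv)

lemma reduced_wpow:
  assumes red: "reduced E w" and not_cyc: "\<not> cyclically_cancellable E w"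
  shows "reduced E (wpow w n)"
proof (rule ccontr)
  assume "\<not> reduced E (wpow w n)"
  then obtain p a s where pas: "wpow w n = p @ a # s" "reduced E p" "cancels a (fst (pile E p))"
    using not_reduced_first_cancel by blast
  then obtain j q s' where jq: "p = wpow w j @ q" "w = q @ a # s'"
    using wpow_split by metis
  let ?F = "touches E (fst a)"
  have last_p: "filter ?F p \<noteq> [] \<and> last (filter ?F p) = inv_letter a"
    using cancels_reduced_last pas(2,3) by blast
  show False
  proof (cases "filter ?F q = []")
    case False
    then have "last (filter ?F q) = inv_letter a" using last_p jq(1) by simp
    then obtain q1 q2 where "q = q1 @ inv_letter a # q2" "filter ?F q2 = []"
      using split_last_filter False by metis
    then show False
      using reduced_no_cancelling_pair[of E q1 "inv_letter a" q2 s'] red jq(2) by simp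
  next
    case True
    then have "filter ?F (wpow w j) \<noteq> [] \<and> last (filter ?F (wpow w j)) = inv_letter a"
      using last_p jq(1) by simp
    moreover have "filter ?F w \<noteq> []" using jq(2) by (simp add: touches_def)
    ultimately have "last (filter ?F w) = inv_letter a"
      by (cases j) (simp_all add: wpow_Suc_right)
    then obtain m1 q' where m1: "w = m1 @ inv_letter a # q'" "filter ?F q' = []"
      using split_last_filter \<open>filter ?F w \<noteq> []\<close> by metis
    have "inv_letter a \<notin> set q" using True by (auto simp: filter_empty_conv touches_def)
    then obtain m where "s' = m @ inv_letter a # q'"
      using append_Cons_eq_append_ConsD[of q a s' m1 "inv_letter a" q'] jq(2) m1(1) by auto
    then show False
      using not_cyc True m1(2) jq(2) unfolding cyclically_cancellable_def by blast
  qed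
qed

lemma eqv_commute_past:
  assumes "fst x \<in> V" "word V q" "filter (touches E (fst x)) q = []"
  shows "eqv V E (x # q) (q @ [x])"
  using assms(2,3)
proof (induction q)
  case Nil
  then show ?case by simp
next
  case (Cons b q)
  have "\<not> touches E (fst x) b" "filter (touches E (fst x)) q = []"
    using Cons.prems(2) by (simp_all split: if_splits)
  then have "\<not> E (fst b) (fst x)" by (simp add: touches_def)
  then have "rstep V E ([] @ b # x # q) ([] @ x # b # q)"
    using assms(1) Cons.prems(1) by (intro rstep.comm) auto
  then have "eqv V E (x # b # q) (b # x # q)" using rstep_eqv eqv_sym by fastforce
  also have "eqv V E (b # x # q) (b # q @ [x])"
    using eqv_append_context[OF Cons.IH, of "[b]" "[]"] Cons.prems(1)
      \<open>filter (touches E (fst x)) q = []\<close> by simp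
  finally show ?case by simp
qed

lemma eqv_cancel_across:
  assumes "fst a \<in> V" "word V q" "filter (touches E (fst a)) q = []"
  shows "eqv V E (p @ inv_letter a # q @ [a]) (p @ q)"
proof -
  have "eqv V E (p @ (inv_letter a # q) @ [a]) (p @ (q @ [inv_letter a]) @ [a])"
    using eqv_append_context[OF eqv_commute_past[of "inv_letter a" V q E], of p "[a]"] assms
    by simp
  also have "p @ (q @ [inv_letter a]) @ [a] = (p @ q) @ inv_letter a # inv_letter (inv_letter a) # []"
    by simp
  also have "eqv V E \<dots> ((p @ q) @ [])"
    by (rule eqv_cancel_letter) (simp add: assms(1))
  finally show ?thesis by simp
qed

section \<open>Invariance of piles\<close>

locale raag =
  fixes E :: "'v \<Rightarrow> 'v \<Rightarrow> bool"
  assumes sym: "E x y \<Longrightarrow> E y x"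
begin

lemma touches_commute: "touches E (fst b) c \<longleftrightarrow> touches E (fst c) b"
  using sym by (auto simp: touches_def)

lemma column_eq_blockers:
  assumes "filter (touches E (fst b)) q = []" "touches E v b"
  shows "column E v q = replicate (length (filter (touches E v) q)) None"
proof -
  have "stack_entry v c = None" if "c \<in> set (filter (touches E v) q)" for c
  proof -
    have "touches E v c" "\<not> touches E (fst b) c"
      using that assms(1) by (auto simp: filter_empty_conv)
    then have "fst c \<noteq> v" using assms(2) sym by (auto simp: touches_def)
    then show ?thesis by (simp add: stack_entry_def)
  qed
  then have "map (stack_entry v) (filter (touches E v) q)
             = replicate (length (filter (touches E v) q)) None"
    by (intro replicate_eqI) auto
  then show ?thesis by (simp add: column_def)
qed

lemma reduced_delete:
  assumes "reduced E (p @ b # q)" "filter (touches E (fst b)) q = []"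
  shows "reduced E (p @ q)"
  using assms
proof (induction q rule: rev_induct)
  case Nil
  then show ?case using reduced_appendD[of E p "[b]"] by simp
next
  case (snoc c q)
  have red: "reduced E ((p @ b # q) @ [c])" using snoc.prems(1) by simp
  have free: "filter (touches E (fst b)) q = []" and "\<not> touches E (fst b) c"
    using snoc.prems(2) by (simp_all split: if_splits)
  then have "\<not> touches E (fst c) b" using touches_commute by blast
  then have "column E (fst c) (p @ q) = column E (fst c) (p @ b # q)"
    by (simp add: column_def)
  moreover have "reduced E (p @ b # q)" "\<not> cancels c (fst (pile E (p @ b # q)))"
    using red unfolding reduced_snoc_iff by simp_all
  moreover have "reduced E (p @ q)" using snoc.IH free \<open>reduced E (p @ b # q)\<close> by blast
  ultimately have "reduced E ((p @ q) @ [c])"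
    unfolding reduced_snoc_iff cancels_def by (simp add: pile_stacks_reduced)
  then show ?case by simp
qed

lemma tl_column_delete:
  assumes "filter (touches E (fst b)) q = []" "touches E v b"
  shows "tl (column E v (p @ b # q)) = column E v (p @ q)"
proof (cases "v = fst b")
  case True
  then have "column E v q = []" using assms(1) column_eq_Nil by simp
  then show ?thesis using True by (simp add: column_def touches_def stack_entry_def)
next
  case False
  have "tl (replicate k None @ None # r) = replicate k None @ r" for k r
    by (cases k) (simp_all add: replicate_append_same)
  then show ?thesis
    using column_eq_blockers[OF assms] assms(2) False by (simp add: column_def stack_entry_def)
qed

lemma pile_cancel_last:
  assumes red: "reduced E (p @ b # q)" and free: "filter (touches E (fst b)) q = []"
  shows "pile E (p @ b # q @ [inv_letter b]) = pile E (p @ q)"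
proof -
  let ?w = "p @ b # q"
  have red': "reduced E (p @ q)" using reduced_delete[OF red free] .
  have "column E (fst b) ?w = Some (snd b) # column E (fst b) p"
    using free by (simp add: column_def touches_def stack_entry_def)
  then have can: "cancels (inv_letter b) (fst (pile E ?w))"
    using pile_stacks_reduced[OF red] by (simp add: cancels_def)
  have "pop_stacks E (inv_letter b) (fst (pile E ?w)) v = fst (pile E (p @ q)) v" for v
    using tl_column_delete[OF free, of v p] pile_stacks_reduced[OF red] pile_stacks_reduced[OF red']
    by (simp add: pop_stacks_def column_def)
  then have pop: "pop_stacks E (inv_letter b) (fst (pile E ?w)) = fst (pile E (p @ q))" ..
  have "pile E (?w @ [inv_letter b])
        = (pop_stacks E (inv_letter b) (fst (pile E ?w)), snd (pile E ?w) - 1)"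
    unfolding pile_snoc pile_step_def using can by simp
  also have "\<dots> = pile E (p @ q)"
    using pop red red' by (simp add: reduced_def prod_eq_iff)
  finally show ?thesis by simp
qed

lemma reduced_representative:
  assumes "word V w"
  shows "\<exists>w'. word V w' \<and> eqv V E w w' \<and> reduced E w' \<and> pile E w' = pile E w"
  using assms
proof (induction w rule: rev_induct)
  case Nil
  then show ?case by (intro exI[of _ "[]"]) (simp add: reduced_def)
next
  case (snoc a w)
  then obtain w' where w': "word V w'" "eqv V E w w'" "reduced E w'" "pile E w' = pile E w"
    by auto
  have a: "fst a \<in> V" using snoc.prems by simp
  have eqv_snoc: "eqv V E (w @ [a]) (w' @ [a])" using eqv_append[OF w'(2) eqv_refl] .
  show ?case
  proof (cases "cancels a (fst (pile E w'))")
    case False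
    then show ?thesis
      using w' a eqv_snoc by (intro exI[of _ "w' @ [a]"]) (simp add: reduced_snoc_iff)
  next
    case True
    then obtain p q where pq: "w' = p @ inv_letter a # q" "filter (touches E (fst a)) q = []"
      using cancels_reduced_split w'(3) by blast
    have pq_word: "word V p" "word V q" using w'(1) pq(1) by simp_all
    have "eqv V E (w' @ [a]) (p @ q)"
      using eqv_cancel_across[of a V q E p] a pq pq_word by simp
    then have "eqv V E (w @ [a]) (p @ q)" using eqv_snoc eqv_trans by blast
    moreover have "pile E (p @ q) = pile E (w @ [a])"
    proof -
      have "pile E (p @ q) = pile E (w' @ [a])"
        using pile_cancel_last[of p "inv_letter a" q] w'(3) pq by simp
      then show ?thesis using w'(4) by simp
    qed
    moreover have "reduced E (p @ q)"
      using reduced_delete[of p "inv_letter a" q] w'(3) pq by simp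
    ultimately show ?thesis using pq_word by (intro exI[of _ "p @ q"]) simp
  qed
qed

lemma reduced_pile_representative: "\<exists>w'. reduced E w' \<and> pile E w' = pile E w"
  using reduced_representative[of "fst ` set w" w] by (auto simp: word_def)

text \<open>The two properties of reachable piles on which their invariance rests, read off from the
  columns of a reduced word with the same pile.\<close>

lemma cancels_pile_neighbour_blocked:
  assumes "cancels a (fst (pile E w))" "E (fst a) v" "v \<noteq> fst a"
  shows "\<exists>r. fst (pile E w) v = None # r"
proof -
  obtain w' where w': "reduced E w'" "pile E w' = pile E w"
    using reduced_pile_representative by blast
  then obtain p q where pq: "w' = p @ inv_letter a # q" "filter (touches E (fst a)) q = []"
    using cancels_reduced_split assms(1) by metis
  have "touches E v (inv_letter a)" using assms(2) by (simp add: touches_def)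
  then have "column E v w' = replicate (length (filter (touches E v) q)) None @ None # column E v p"
    using column_eq_blockers[of "inv_letter a" q v] pq assms(3)
    by (simp add: column_def stack_entry_def)
  then show ?thesis
    using pile_stacks_reduced[OF w'(1)] w'(2) by (cases "length (filter (touches E v) q)") auto
qed

lemma cancels_pile_no_adjacent_inverse:
  assumes "cancels a (fst (pile E w))"
  shows "\<not> cancels (inv_letter a) (pop_stacks E a (fst (pile E w)))"
proof
  assume again: "cancels (inv_letter a) (pop_stacks E a (fst (pile E w)))"
  obtain w' where w': "reduced E w'" "pile E w' = pile E w"
    using reduced_pile_representative by blast
  then obtain p q where pq: "w' = p @ inv_letter a # q" "filter (touches E (fst a)) q = []"
    using cancels_reduced_split assms by metis
  have "pile E (w' @ [a]) = pile E (p @ q)"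
    using pile_cancel_last[of p "inv_letter a" q] w'(1) pq by simp
  moreover have "pile E (w' @ [a]) = (pop_stacks E a (fst (pile E w)), snd (pile E w) - 1)"
    using assms w'(2) by (simp add: pile_step_def)
  ultimately have "pop_stacks E a (fst (pile E w)) = fst (pile E (p @ q))"
    by (metis fst_conv)
  moreover have "reduced E (p @ q)" "reduced E p"
    using reduced_delete[of p "inv_letter a" q] reduced_appendD[of E p] w'(1) pq by simp_all
  moreover have "column E (fst a) (p @ q) = column E (fst a) p"
    using pq(2) by (simp add: column_eq_Nil)
  ultimately have "cancels (inv_letter a) (fst (pile E p))"
    using again by (simp add: cancels_def pile_stacks_reduced)
  then obtain p1 p2 where "p = p1 @ a # p2" "filter (touches E (fst a)) p2 = []"
    using cancels_reduced_split[OF \<open>reduced E p\<close>] by fastforce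
  then show False using reduced_no_cancelling_pair[of E p1 a p2 q] w'(1) pq(1) by simp
qed

lemma pile_snoc_snoc: "pile E (xs @ [a, b]) = pile_step E b (pile_step E a (pile E xs))"
  by (simp add: pile_def)

lemma pile_cancel_pair: "pile E (xs @ [a, inv_letter a]) = pile E xs"
proof -
  obtain P n where Pn: "pile E xs = (P, n)" by fastforce
  show ?thesis
  proof (cases "cancels a P")
    case True
    have "push_stacks E (inv_letter a) (pop_stacks E a P) v = P v" for v
    proof (cases "touches E v a")
      case touch: True
      show ?thesis
      proof (cases "v = fst a")
        case True
        then show ?thesis
          using \<open>cancels a P\<close> touch by (auto simp: cancels_def push_stacks_def pop_stacks_def stack_entry_def)
      next
        case False
        then obtain r where "P v = None # r"
          using cancels_pile_neighbour_blocked[of a xs v] \<open>cancels a P\<close> touch Pn by (auto simp: touches_def)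
        then show ?thesis using False touch by (simp add: push_stacks_def pop_stacks_def stack_entry_def)
      qed
    next
      case False
      then show ?thesis by (simp add: push_stacks_def pop_stacks_def)
    qed
    moreover have "\<not> cancels (inv_letter a) (pop_stacks E a P)"
      using cancels_pile_no_adjacent_inverse[of a xs] True Pn by simp
    ultimately show ?thesis using True Pn by (simp add: pile_snoc_snoc pile_step_def fun_eq_iff)
  next
    case False
    have "cancels (inv_letter a) (push_stacks E a P)"
      by (simp add: cancels_def push_stacks_def touches_def stack_entry_def)
    moreover have "pop_stacks E (inv_letter a) (push_stacks E a P) = P"
      by (simp add: push_stacks_def pop_stacks_def fun_eq_iff)
    ultimately show ?thesis using False Pn by (simp add: pile_snoc_snoc pile_step_def)
  qed
qed

lemma pile_commute_pair_distinct:
  assumes "\<not> E (fst a) (fst b)" "fst a \<noteq> fst b"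
  shows "pile E (xs @ [a, b]) = pile E (xs @ [b, a])"
proof -
  obtain P n where Pn: "pile E xs = (P, n)" by fastforce
  have both: "v \<noteq> fst a \<and> v \<noteq> fst b \<and> E (fst a) v \<and> E (fst b) v"
    if "touches E v a" "touches E v b" for v
    using that assms sym by (auto simp: touches_def)
  have indep: "cancels b (push_stacks E a P) = cancels b P" "cancels b (pop_stacks E a P) = cancels b P"
              "cancels a (push_stacks E b P) = cancels a P" "cancels a (pop_stacks E b P) = cancels a P"
    using assms sym by (auto simp: cancels_def push_stacks_def pop_stacks_def touches_def)
  have blocked: "\<exists>r. P v = None # r" if "cancels c P" "touches E v c" "v \<noteq> fst c" for c v
    using cancels_pile_neighbour_blocked[of c xs v] that Pn by (auto simp: touches_def)
  show ?thesis
  proof (cases "cancels a P"; cases "cancels b P")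
    assume "cancels a P" "cancels b P"
    moreover have "pop_stacks E b (pop_stacks E a P) = pop_stacks E a (pop_stacks E b P)"
      by (auto simp: pop_stacks_def fun_eq_iff)
    ultimately show ?thesis using Pn indep by (simp add: pile_snoc_snoc pile_step_def)
  next
    assume "cancels a P" "\<not> cancels b P"
    moreover have "push_stacks E b (pop_stacks E a P) = pop_stacks E a (push_stacks E b P)"
      using both blocked[OF \<open>cancels a P\<close>]
      by (fastforce simp: push_stacks_def pop_stacks_def stack_entry_def fun_eq_iff)
    ultimately show ?thesis using Pn indep by (simp add: pile_snoc_snoc pile_step_def)
  next
    assume "\<not> cancels a P" "cancels b P"
    moreover have "pop_stacks E b (push_stacks E a P) = push_stacks E a (pop_stacks E b P)"
      using both blocked[OF \<open>cancels b P\<close>]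
      by (fastforce simp: push_stacks_def pop_stacks_def stack_entry_def fun_eq_iff)
    ultimately show ?thesis using Pn indep by (simp add: pile_snoc_snoc pile_step_def)
  next
    assume "\<not> cancels a P" "\<not> cancels b P"
    moreover have "push_stacks E b (push_stacks E a P) = push_stacks E a (push_stacks E b P)"
      using both by (auto simp: push_stacks_def stack_entry_def fun_eq_iff)
    ultimately show ?thesis using Pn indep by (simp add: pile_snoc_snoc pile_step_def)
  qed
qed

lemma pile_commute_pair:
  assumes "\<not> E (fst a) (fst b)"
  shows "pile E (xs @ [a, b]) = pile E (xs @ [b, a])"
proof (cases "fst a = fst b")
  case True
  then consider "b = a" | "b = inv_letter a"
    by (cases a, cases b) (auto simp: inv_letter_def)
  then show ?thesis
  proof cases
    case 2
    then show ?thesis using pile_cancel_pair[of xs a] pile_cancel_pair[of xs "inv_letter a"] by simp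
  qed simp
next
  case False
  then show ?thesis using pile_commute_pair_distinct assms by blast
qed

lemma pile_rstep: "rstep V E x y \<Longrightarrow> pile E x = pile E y"
proof (induction rule: rstep.induct)
  case (cancel a xs ys)
  then show ?case using pile_cancel_pair[of xs a] pile_append[of E "xs @ [a, inv_letter a]" ys]
    by (simp add: pile_append)
next
  case (comm a b xs ys)
  then show ?case using pile_commute_pair[of a b xs] pile_append[of E "xs @ [a, b]" ys]
    pile_append[of E "xs @ [b, a]" ys] by simp
qed

lemma pile_eqv: "eqv V E x y \<Longrightarrow> pile E x = pile E y"
  unfolding eqv_def
proof (induction rule: equivclp_induct)
  case base
  then show ?case by simp
next
  case (step y z)
  then show ?case using pile_rstep by metis
qed

lemma wlen_reduced: "reduced E w \<Longrightarrow> wlen V E w = length w"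
proof -
  assume red: "reduced E w"
  obtain w' where w': "eqv V E w w'" "length w' = wlen V E w" using wlen_witness by blast
  have "int (length w) = snd (pile E w')" using red pile_eqv[OF w'(1)] by (simp add: reduced_def)
  also have "\<dots> \<le> int (wlen V E w)" using pile_count_le_length[of E w'] w'(2) by simp
  finally show ?thesis using wlen_le_length[of V E w] by simp
qed

lemma wlen_singleton: "wlen V E [a] = 1"
  using wlen_reduced[OF reduced_singleton] by simp

lemma reduced_geodesic_representative:
  assumes "word V g"
  obtains w where "word V w" "eqv V E g w" "reduced E w" "length w = wlen V E g"
  using reduced_representative[OF assms] wlen_reduced wlen_eqv by metis

lemma cyclically_cancellable_conjugate:
  assumes "word V w" "reduced E w" "cyclically_cancellable E w"
  obtains a h where "fst a \<in> V" "word V h" "eqv V E w (a # h @ [inv_letter a])"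
    "wlen V E w = wlen V E h + 2"
proof -
  obtain q a m q' where w: "w = q @ a # m @ inv_letter a # q'"
    and free: "filter (touches E (fst a)) q = []" "filter (touches E (fst a)) q' = []"
    using assms(3) unfolding cyclically_cancellable_def by blast
  define h where "h = q @ m @ q'"
  have a: "fst a \<in> V" and words: "word V q" "word V m" "word V q'"
    using assms(1) w by simp_all
  have "eqv V E (q @ [a]) (a # q)"
    using eqv_commute_past[of a V q E] a words free(1) by (simp add: eqv_sym)
  moreover have "eqv V E (inv_letter a # q') (q' @ [inv_letter a])"
    using eqv_commute_past[of "inv_letter a" V q' E] a words free(2) by simp
  ultimately have "eqv V E ((q @ [a]) @ m @ (inv_letter a # q')) ((a # q) @ m @ (q' @ [inv_letter a]))"
    by (intro eqv_append eqv_refl)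
  then have conj: "eqv V E w (a # h @ [inv_letter a])" unfolding w h_def by simp
  have "length h + 2 = wlen V E w" using wlen_reduced[OF assms(2)] w h_def by simp
  also have "\<dots> \<le> wlen V E [a] + (wlen V E h + wlen V E [inv_letter a])"
    using wlen_eqv[OF conj] wlen_append_le[of V E "[a]" "h @ [inv_letter a]"]
      wlen_append_le[of V E h "[inv_letter a]"] by simp
  finally have "wlen V E w = wlen V E h + 2"
    using wlen_le_length[of V E h] \<open>length h + 2 = wlen V E w\<close> by (simp add: wlen_singleton)
  moreover have "word V h" using words unfolding h_def by simp
  ultimately show ?thesis using that a conj by blast
qed

context
  fixes V g a h
  assumes a: "fst a \<in> V" and h: "word V h" and conj: "eqv V E g (a # h @ [inv_letter a])"
    and shorter: "wlen V E g = wlen V E h + 2"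
begin

lemma letter_conjugate_geodesic:
  shows "\<exists>u h'. word V u \<and> word V h' \<and> \<not> eqv V E u [] \<and> eqv V E g (inv_word u @ h' @ u) \<and>
           wlen V E g = wlen V E (inv_word u) + wlen V E h' + wlen V E u"
proof (intro exI conjI)
  show "word V [inv_letter a]" "word V h" using a h by simp_all
  show "\<not> eqv V E [inv_letter a] []" using wlen_singleton wlen_eq_0_iff by (metis one_neq_zero)
  show "eqv V E g (inv_word [inv_letter a] @ h @ [inv_letter a])" using conj by simp
  show "wlen V E g = wlen V E (inv_word [inv_letter a]) + wlen V E h + wlen V E [inv_letter a]"
    using shorter by (simp add: wlen_singleton)
qed

lemma letter_conjugate_wlen_wpow_less:
  assumes "n \<ge> 2"
  shows "wlen V E (wpow g n) < n * wlen V E g"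
proof -
  have "eqv V E (wpow g n) (wpow (inv_word [inv_letter a] @ h @ [inv_letter a]) n)"
    using eqv_wpow[OF conj] by simp
  also have "eqv V E \<dots> (inv_word [inv_letter a] @ wpow h n @ [inv_letter a])"
    using eqv_conjugate_wpow[of V "[inv_letter a]" E h n] a by (simp add: eqv_sym)
  finally have "wlen V E (wpow g n) = wlen V E ([a] @ wpow h n @ [inv_letter a])"
    using wlen_eqv by simp
  also have "\<dots> \<le> 1 + (n * wlen V E h + 1)"
    using wlen_append_le[of V E "[a]" "wpow h n @ [inv_letter a]"]
      wlen_append_le[of V E "wpow h n" "[inv_letter a]"] wlen_wpow_le[of V E h n]
    by (simp add: wlen_singleton)
  also have "\<dots> < n * wlen V E g"
    using assms shorter by (simp add: algebra_simps)
  finally show ?thesis .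
qed

lemma letter_conjugate_rotation_not_geodesic:
  shows "\<exists>g1 g2. word V g1 \<and> word V g2 \<and> eqv V E g (g1 @ g2) \<and>
           wlen V E g = wlen V E g1 + wlen V E g2 \<and> wlen V E (g2 @ g1) \<noteq> wlen V E g2 + wlen V E g1"
proof (intro exI conjI)
  let ?g2 = "h @ [inv_letter a]"
  show "word V [a]" "word V ?g2" "eqv V E g ([a] @ ?g2)" using a h conj by simp_all
  have "wlen V E g \<le> 1 + wlen V E ?g2"
    using wlen_eqv[OF conj] wlen_append_le[of V E "[a]" ?g2] by (simp add: wlen_singleton)
  moreover have "wlen V E ?g2 \<le> wlen V E h + 1"
    using wlen_append_le[of V E h "[inv_letter a]"] by (simp add: wlen_singleton)
  ultimately show g2: "wlen V E g = wlen V E [a] + wlen V E ?g2"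
    using shorter by (simp add: wlen_singleton)
  have "eqv V E (h @ inv_letter a # inv_letter (inv_letter a) # []) (h @ [])"
    using a by (intro eqv_cancel_letter) simp
  then have "wlen V E (?g2 @ [a]) = wlen V E h" using wlen_eqv by fastforce
  then show "wlen V E (?g2 @ [a]) \<noteq> wlen V E ?g2 + wlen V E [a]"
    using g2 shorter by (simp add: wlen_singleton)
qed

end

end

theorem lemma2p1:
  fixes V :: "'v set" and E :: "'v \<Rightarrow> 'v \<Rightarrow> bool" and g :: "'v letter list"
  assumes "finite V"
    and "\<And>x y. E x y \<Longrightarrow> x \<in> V \<and> y \<in> V"
    and "\<And>x y. E x y \<Longrightarrow> E y x"
    and "\<And>x. \<not> E x x"
    and "word V g"
  shows "(cyc_reduced V E g \<longleftrightarrow>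
            \<not> (\<exists>u h. word V u \<and> word V h \<and> \<not> eqv V E u [] \<and>
                  eqv V E g (inv_word u @ h @ u) \<and>
                  wlen V E g = wlen V E (inv_word u) + wlen V E h + wlen V E u))
       \<and> (cyc_reduced V E g \<longleftrightarrow>
            (\<forall>n::nat. n \<ge> 2 \<longrightarrow> wlen V E (wpow g n) = n * wlen V E g))
       \<and> (cyc_reduced V E g \<longleftrightarrow>
            (\<exists>n::nat. n \<ge> 2 \<and> wlen V E (wpow g n) = n * wlen V E g))
       \<and> (cyc_reduced V E g \<longleftrightarrow>
            (\<forall>g1 g2. word V g1 \<and> word V g2 \<and> eqv V E g (g1 @ g2) \<and>
                wlen V E g = wlen V E g1 + wlen V E g2 \<longrightarrow>
                wlen V E (g2 @ g1) = wlen V E g2 + wlen V E g1))"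
proof -
  interpret raag E \<comment> \<open>only the symmetry of E is needed\<close>
    using assms(3) by unfold_locales
  obtain w where w: "word V w" "eqv V E g w" "reduced E w" "length w = wlen V E g"
    using reduced_geodesic_representative[OF assms(5)] .
  show ?thesis
  proof (cases "cyclically_cancellable E w")
    case False
    have powers: "wlen V E (wpow g n) = n * wlen V E g" for n
      using wlen_eqv[OF eqv_wpow[OF w(2)]] wlen_reduced[OF reduced_wpow[OF w(3) False]] w(4)
      by simp
    then have "cyc_reduced V E g" by (rule cyc_reduced_if_wlen_wpow)
    then show ?thesis
      using powers cyc_reduced_conjugation_not_geodesic cyc_reduced_rotation_geodesic
      by (metis order_refl)
  next
    case True
    then obtain a h where "fst a \<in> V" "word V h" "eqv V E w (a # h @ [inv_letter a])"
      "wlen V E w = wlen V E h + 2"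
      using cyclically_cancellable_conjugate w(1,3) by blast
    then have a: "fst a \<in> V" "word V h" "eqv V E g (a # h @ [inv_letter a])"
      "wlen V E g = wlen V E h + 2"
      using w(2) eqv_trans wlen_eqv by metis+
    then have "\<not> cyc_reduced V E g"
      using letter_conjugate_geodesic cyc_reduced_conjugation_not_geodesic by blast
    then show ?thesis
      using a letter_conjugate_geodesic letter_conjugate_wlen_wpow_less
        letter_conjugate_rotation_not_geodesic
      by (metis less_irrefl order_refl)
  qed
qed

end
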